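(* Let $n=m\delta$ with integers $m,\delta\ge 1$, let $V=\mathbb{F}_2^n=V_1\times\cdots\times V_\delta$ with each brick $V_j\cong\mathbb{F}_2^m$, where $V_j$ consists of the coordinates $(j-1)m,\dots,jm-1$. Let $\gamma\in\mathrm{Sym}(V)$ be a parallel S-Box, i.e. $(x_1,\dots,x_\delta)\gamma=(x_1\gamma_1,\dots,x_\delta\gamma_\delta)$ for $x_j\in V_j$, where each $\gamma_j\in\mathrm{Sym}(V_j)$ and $0\gamma_j\neq 0$. Let $\lambda\in\mathrm{Sym}(V)$ be an invertible linear map (mixing layer) which is non-type-preserving. For $k\in V$ let $\sigma_k:v\mapsto v\boxplus k$ be the translation by $k$ modulo $2^n$, and let $\Gamma_\infty=\langle \gamma\lambda\sigma_k : k\in V\rangle\le\mathrm{Sym}(V)$ be the group generated by the round functions $\varepsilon_k=\gamma\lambda\sigma_k$. Then $\Gamma_\infty$ is primitive on $V$.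
   Context: A vector $a=(a_0,\dots,a_{n-1})\in V$ is identified with the integer $\sum_i a_i2^i$, and $\boxplus$ is addition of these integers modulo $2^n$. Maps act on the right and are composed left to right. Type of a subset: for $D\subseteq V$, its type is the sequence of $\delta$ symbols whose $j$-th entry is "white" if the projection of $D$ onto $V_j$ has size $1$, "ruled" if that projection has size $t$ with $1<t<2^m$, and "black" if the projection is all of $V_j$. Non-type-preserving: an invertible linear map $\lambda$ of $V$ is called non-type-preserving if for every subset $D\subseteq V$ whose type is of the form (first $a$ entries white, then $b$ entries ruled, then $c$ entries black) with integers $a,c\ge 0$, $b\in\{0,1\}$, $a+b+c=\delta$, and not all-white and not all-black, the type of $D\lambda=\{v\lambda:v\in D\}$ differs from the type of $D$. A group $G\le\mathrm{Sym}(V)$ is primitive if it is transitive and preserves no partition of $V$ other than $\{V\}$ and the partition into singletons. *)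

theory Defs
  imports "HOL-Algebra.Bij" "HOL-Algebra.Generated_Groups"
begin

text \<open>Vectors of V = F_2^n are identified with the naturals 0 ..< 2^n,
  coordinate i being bit i.  Brick j (0-based, j < delta) consists of the
  coordinates j*m ..< (j+1)*m.\<close>

definition vspace :: "nat \<Rightarrow> nat set" where
  "vspace n = {..<2^n}"

definition brick_proj :: "nat \<Rightarrow> nat \<Rightarrow> nat \<Rightarrow> nat" where
  "brick_proj m j v = (v div 2^(j*m)) mod 2^m"

definition transl :: "nat \<Rightarrow> nat \<Rightarrow> nat \<Rightarrow> nat" where
  "transl n k v = (v + k) mod 2^n"

text \<open>F_2-linear map of V (additivity w.r.t. xor; over F_2 this is linearity).\<close>
definition f2_linear :: "nat \<Rightarrow> (nat \<Rightarrow> nat) \<Rightarrow> bool" where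
  "f2_linear n f \<longleftrightarrow> (\<forall>x\<in>vspace n. f x \<in> vspace n) \<and>
     (\<forall>x\<in>vspace n. \<forall>y\<in>vspace n. f (xor x y) = xor (f x) (f y))"

definition parallel_sbox :: "nat \<Rightarrow> nat \<Rightarrow> (nat \<Rightarrow> nat \<Rightarrow> nat) \<Rightarrow> (nat \<Rightarrow> nat) \<Rightarrow> bool" where
  "parallel_sbox m \<delta> gs g \<longleftrightarrow>
     (\<forall>j<\<delta>. bij_betw (gs j) {..<2^m} {..<2^m} \<and> gs j 0 \<noteq> 0) \<and>
     (\<forall>v\<in>vspace (m*\<delta>). g v = (\<Sum>j<\<delta>. gs j (brick_proj m j v) * 2^(j*m)))"

datatype symb = White | Ruled | Black

definition brick_symb :: "nat \<Rightarrow> nat set \<Rightarrow> nat \<Rightarrow> symb" where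
  "brick_symb m D j =
     (let t = card (brick_proj m j ` D) in
      if t = 1 then White else if t = 2^m then Black else Ruled)"

definition set_type :: "nat \<Rightarrow> nat \<Rightarrow> nat set \<Rightarrow> symb list" where
  "set_type m \<delta> D = map (brick_symb m D) [0..<\<delta>]"

definition non_type_preserving :: "nat \<Rightarrow> nat \<Rightarrow> (nat \<Rightarrow> nat) \<Rightarrow> bool" where
  "non_type_preserving m \<delta> f \<longleftrightarrow>
     (\<forall>D a b c. D \<subseteq> vspace (m*\<delta>) \<and> D \<noteq> {} \<and> b \<le> 1 \<and> a + b + c = \<delta> \<and>
        set_type m \<delta> D = replicate a White @ replicate b Ruled @ replicate c Black \<and>
        a \<noteq> \<delta> \<and> c \<noteq> \<delta>
        \<longrightarrow> set_type m \<delta> (f ` D) \<noteq> set_type m \<delta> D)"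

definition is_partition :: "'a set \<Rightarrow> 'a set set \<Rightarrow> bool" where
  "is_partition S P \<longleftrightarrow> (\<forall>B\<in>P. B \<noteq> {}) \<and> \<Union>P = S \<and>
     (\<forall>B\<in>P. \<forall>C\<in>P. B \<noteq> C \<longrightarrow> B \<inter> C = {})"

definition primitive_on :: "('a \<Rightarrow> 'a) set \<Rightarrow> 'a set \<Rightarrow> bool" where
  "primitive_on G S \<longleftrightarrow>
     (\<forall>x\<in>S. \<forall>y\<in>S. \<exists>g\<in>G. g x = y) \<and>
     (\<forall>P. is_partition S P \<and> (\<forall>g\<in>G. \<forall>B\<in>P. g ` B \<in> P)
        \<longrightarrow> P = {S} \<or> P = (\<lambda>x. {x}) ` S)"

text \<open>Round function epsilon_k = gamma lambda sigma_k (maps act on the right,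
  so gamma is applied first), as an element of Sym(V).\<close>
definition round_fun :: "nat \<Rightarrow> (nat \<Rightarrow> nat) \<Rightarrow> (nat \<Rightarrow> nat) \<Rightarrow> nat \<Rightarrow> nat \<Rightarrow> nat" where
  "round_fun n g l k = (\<lambda>v\<in>vspace n. transl n k (l (g v)))"

end

theory Submission
  imports Defs "HOL-Computational_Algebra.Primes" "HOL-Number_Theory.Cong"
begin

text \<open>Since \<open>\<epsilon>\<^sub>k = \<epsilon>\<^sub>0 \<sigma>\<^sub>k\<close>, the group contains every
  translation \<open>\<sigma>\<^sub>k\<close>, i.e. the regular cyclic group of integers modulo \<open>2^n\<close>. This makes
  it transitive, and a partition invariant under all translations consists of the cosets of a
  subgroup \<open>2^i \<int> / 2^n \<int>\<close>, i.e. of the sets of vectors with prescribed first \<open>i\<close>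
  coordinates. For \<open>0 < i < n\<close> such a coset \<open>C\<close> has type \<open>(white^a, ruled^b, black^c)\<close>
  with \<open>b \<le> 1\<close>, the same for all cosets. The parallel S-box preserves the type of every set,
  and \<open>\<epsilon>\<^sub>0\<close> maps \<open>C\<close> onto another coset, so \<open>\<lambda>\<close> preserves the type of \<open>C\<gamma>\<close>,
  contradicting that \<open>\<lambda>\<close> is non-type-preserving.\<close>

section \<open>Bricks of a vector\<close>

lemma brick_proj_less: "brick_proj m j x < 2^m"
  unfolding brick_proj_def by simp

lemma brick_proj_mod_pow:
  assumes "Suc j * m \<le> e"
  shows "brick_proj m j (x mod 2^e) = brick_proj m j x"
proof -
  have "(2::nat)^(j*m + m) dvd 2^e" using assms by (intro le_imp_power_dvd) simp
  then show ?thesis unfolding brick_proj_def div_exp_mod_exp_eq by (simp add: mod_mod_cancel)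
qed

lemma brick_proj_mod_pow_eq:
  assumes "z mod 2^i = c mod 2^i" and "j*m + r \<le> i" and "r \<le> m"
  shows "brick_proj m j z mod 2^r = brick_proj m j c mod 2^r"
proof -
  have low: "brick_proj m j x mod 2^r = (x mod 2^(j*m + r)) div 2^(j*m)" for x
    using assms(3) unfolding brick_proj_def div_exp_mod_exp_eq[symmetric]
    by (simp add: mod_mod_cancel le_imp_power_dvd)
  have dvd: "(2::nat)^(j*m + r) dvd 2^i" using assms(2) by (rule le_imp_power_dvd)
  have "z mod 2^(j*m + r) = z mod 2^i mod 2^(j*m + r)" using dvd by (simp add: mod_mod_cancel)
  also have "\<dots> = c mod 2^(j*m + r)" using dvd assms(1) by (simp add: mod_mod_cancel)
  finally have "z mod 2^(j*m + r) = c mod 2^(j*m + r)" .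
  then show ?thesis unfolding low by simp
qed

lemma brick_proj_digit_sum:
  fixes d :: "nat \<Rightarrow> nat"
  assumes "\<And>i. i < k \<Longrightarrow> d i < 2^m"
  shows "(\<Sum>i<k. d i * 2^(i*m)) < 2^(k*m)"
    and "j < k \<Longrightarrow> brick_proj m j (\<Sum>i<k. d i * 2^(i*m)) = d j"
proof -
  have "(\<Sum>i<k. d i * 2^(i*m)) < 2^(k*m) \<and>
        (\<forall>j<k. brick_proj m j (\<Sum>i<k. d i * 2^(i*m)) = d j)"
    using assms
  proof (induction k)
    case 0
    then show ?case by simp
  next
    case (Suc k)
    let ?s = "\<Sum>i<k. d i * 2^(i*m)"
    have s: "?s < 2^(k*m)" and proj_s: "\<And>j. j < k \<Longrightarrow> brick_proj m j ?s = d j"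
      using Suc by auto
    have dk: "d k < 2^m" using Suc.prems by simp
    have "?s + d k * 2^(k*m) < (d k + 1) * 2^(k*m)" using s by simp
    also have "\<dots> \<le> 2^m * 2^(k*m)" using dk by (intro mult_right_mono) auto
    also have "\<dots> = 2^(Suc k * m)" by (simp add: power_add[symmetric] algebra_simps)
    finally have less: "?s + d k * 2^(k*m) < 2^(Suc k * m)" .
    have "brick_proj m j (?s + d k * 2^(k*m)) = d j" if "j < Suc k" for j
    proof (cases "j < k")
      case True
      have "(?s + d k * 2^(k*m)) mod 2^(k*m) = ?s" using s by simp
      moreover have "Suc j * m \<le> k * m" using True by (intro mult_le_mono1) simp
      ultimately show ?thesis
        using brick_proj_mod_pow[of j m "k*m" "?s + d k * 2^(k*m)"] proj_s True by simp
    next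
      case False
      with that have "j = k" by simp
      then show ?thesis using s dk unfolding brick_proj_def by simp
    qed
    then show ?case using less by simp
  qed
  then show "(\<Sum>i<k. d i * 2^(i*m)) < 2^(k*m)"
    and "j < k \<Longrightarrow> brick_proj m j (\<Sum>i<k. d i * 2^(i*m)) = d j" by auto
qed

lemma digit_sum_brick_proj:
  assumes "v < 2^(k*m)"
  shows "(\<Sum>j<k. brick_proj m j v * 2^(j*m)) = v"
  using assms
proof (induction k arbitrary: v)
  case 0
  then show ?case by simp
next
  case (Suc k)
  have "brick_proj m j (v mod 2^(k*m)) = brick_proj m j v" if "j < k" for j
    using that by (intro brick_proj_mod_pow mult_le_mono1) simp
  then have "(\<Sum>j<k. brick_proj m j v * 2^(j*m)) = v mod 2^(k*m)"
    using Suc.IH[of "v mod 2^(k*m)"] by simp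
  moreover have "brick_proj m k v = v div 2^(k*m)"
    using Suc.prems unfolding brick_proj_def
    by (simp add: less_mult_imp_div_less power_add mult.commute)
  ultimately show ?case by (simp add: mod_div_mult_eq)
qed

section \<open>Parallel S-boxes\<close>

lemma parallel_sbox_brick_proj:
  assumes sbox: "parallel_sbox m \<delta> gs g" and v: "v \<in> vspace (m*\<delta>)"
  shows "g v \<in> vspace (m*\<delta>)"
    and "j < \<delta> \<Longrightarrow> brick_proj m j (g v) = gs j (brick_proj m j v)"
proof -
  have g_v: "g v = (\<Sum>j<\<delta>. gs j (brick_proj m j v) * 2^(j*m))"
    using sbox v unfolding parallel_sbox_def by blast
  have "gs i (brick_proj m i v) < 2^m" if "i < \<delta>" for i
    using sbox that brick_proj_less[of m i v]
    unfolding parallel_sbox_def bij_betw_def by auto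
  note digits = brick_proj_digit_sum[where d = "\<lambda>i. gs i (brick_proj m i v)", OF this]
  from digits g_v
  show "g v \<in> vspace (m*\<delta>)"
    and "j < \<delta> \<Longrightarrow> brick_proj m j (g v) = gs j (brick_proj m j v)"
    by (auto simp: vspace_def mult.commute)
qed

lemma parallel_sbox_bij:
  assumes sbox: "parallel_sbox m \<delta> gs g"
  shows "bij_betw g (vspace (m*\<delta>)) (vspace (m*\<delta>))"
proof -
  have "inj_on g (vspace (m*\<delta>))"
  proof (rule inj_onI)
    fix v w assume v: "v \<in> vspace (m*\<delta>)" and w: "w \<in> vspace (m*\<delta>)" and eq: "g v = g w"
    have "brick_proj m j v = brick_proj m j w" if j: "j < \<delta>" for j
    proof -
      have "inj_on (gs j) {..<2^m}" using sbox j unfolding parallel_sbox_def bij_betw_def by blast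
      moreover have "gs j (brick_proj m j v) = gs j (brick_proj m j w)"
        using parallel_sbox_brick_proj(2)[OF sbox _ j] v w eq by metis
      ultimately show ?thesis using brick_proj_less by (auto dest: inj_onD)
    qed
    then have "(\<Sum>j<\<delta>. brick_proj m j v * 2^(j*m)) = (\<Sum>j<\<delta>. brick_proj m j w * 2^(j*m))"
      by simp
    then show "v = w"
      using v w digit_sum_brick_proj[of _ \<delta> m] by (simp add: vspace_def mult.commute)
  qed
  moreover have "g ` vspace (m*\<delta>) \<subseteq> vspace (m*\<delta>)"
    using parallel_sbox_brick_proj(1)[OF sbox] by auto
  ultimately show ?thesis
    by (simp add: bij_betw_def endo_inj_surj vspace_def)
qed

lemma set_type_parallel_sbox_image:
  assumes sbox: "parallel_sbox m \<delta> gs g" and D: "D \<subseteq> vspace (m*\<delta>)"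
  shows "set_type m \<delta> (g ` D) = set_type m \<delta> D"
proof -
  have "brick_symb m (g ` D) j = brick_symb m D j" if j: "j < \<delta>" for j
  proof -
    have "brick_proj m j ` g ` D = gs j ` brick_proj m j ` D"
      using parallel_sbox_brick_proj(2)[OF sbox _ j] D by (force simp: image_image)
    moreover have "inj_on (gs j) (brick_proj m j ` D)"
      using sbox j brick_proj_less unfolding parallel_sbox_def bij_betw_def
      by (blast intro: inj_on_subset)
    ultimately show ?thesis unfolding brick_symb_def by (simp add: card_image)
  qed
  then show ?thesis unfolding set_type_def by simp
qed

section \<open>Translation-invariant partitions of the integers modulo N\<close>

text \<open>For \<open>d\<close> dividing \<open>N\<close>, \<^term>\<open>mod_class N d c\<close> is the coset of \<open>c\<close> modulo the subgroup
  generated by \<open>d\<close>; for \<open>N = 2^n\<close> and \<open>d = 2^i\<close> it consists of the vectors agreeing with \<open>c\<close>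
  in the coordinates \<open>0, \<dots>, i - 1\<close>.\<close>

definition mod_class :: "nat \<Rightarrow> nat \<Rightarrow> nat \<Rightarrow> nat set" where
  "mod_class N d c = {z. z < N \<and> z mod d = c mod d}"

lemma add_one_mod_neq:
  assumes "1 < (N::nat)"
  shows "(x + 1) mod N \<noteq> x mod N"
  using assms cong_add_rcancel_0_nat[of 1 x N] unfolding cong_def by (simp add: add.commute)

lemma bij_betw_add_mod: "bij_betw (\<lambda>x. (x + k) mod N) {..<N} {..<(N::nat)}"
proof -
  have "inj_on (\<lambda>x. (x + k) mod N) {..<N}"
    by (rule inj_onI) (simp add: cong_add_rcancel_nat[unfolded cong_def])
  moreover have "(\<lambda>x. (x + k) mod N) ` {..<N} \<subseteq> {..<N}"
    by (cases "N = 0") auto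
  ultimately show ?thesis by (simp add: bij_betw_def endo_inj_surj)
qed

lemma add_mod_image_mod_class:
  assumes "d dvd N"
  shows "(\<lambda>z. (z + x) mod N) ` mod_class N d 0 = mod_class N d x"
proof -
  let ?t = "\<lambda>z. (z + x) mod N"
  have "?t z \<in> mod_class N d x \<longleftrightarrow> z \<in> mod_class N d 0" if "z < N" for z
  proof -
    have "?t z mod d = (z + x) mod d" using assms by (simp add: mod_mod_cancel)
    then show ?thesis
      using that cong_add_rcancel_0_nat[of z x d] unfolding mod_class_def cong_def by auto
  qed
  then have "mod_class N d 0 = {z \<in> {..<N}. ?t z \<in> mod_class N d x}"
    unfolding mod_class_def by auto
  moreover have "mod_class N d x \<subseteq> ?t ` {..<N}"
    using bij_betw_add_mod[of x N] unfolding mod_class_def bij_betw_def by auto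
  ultimately show ?thesis by auto
qed

lemma translation_closed_eq_multiples:
  fixes N :: nat
  assumes zero: "0 \<in> B" and sub: "B \<subseteq> {..<N}"
    and closed: "\<And>h. h \<in> B \<Longrightarrow> (\<lambda>x. (x + h) mod N) ` B = B"
  shows "\<exists>d. d dvd N \<and> B = {z. z < N \<and> d dvd z}"
proof -
  \<comment> \<open>the generator of \<open>B\<close>; \<open>N\<close> plays the role of \<open>0\<close> when \<open>B = {0}\<close>\<close>
  define d where "d = Min (insert N B - {0})"
  have fin: "finite (insert N B - {0})" using sub finite_subset by auto
  have "d \<in> insert N B - {0}" unfolding d_def using zero sub fin by (intro Min_in) auto
  then have d: "d \<in> insert N B" "0 < d" by auto
  have d_min: "d \<le> x" if "x \<in> B" "x \<noteq> 0" for x unfolding d_def using fin that by simp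
  have step: "(x + d) mod N \<in> B" if "x \<in> B" for x
  proof (cases "d = N")
    case True
    then show ?thesis using that sub by auto
  next
    case False
    then have "d \<in> B" using d by auto
    then show ?thesis using closed[of d] that by blast
  qed
  have multiple: "k * d \<in> B" if "k * d < N" for k
    using that
  proof (induction k)
    case 0
    then show ?case using zero by simp
  next
    case (Suc k)
    then have "k * d \<in> B" by simp
    then have "(k * d + d) mod N \<in> B" by (rule step)
    moreover have "(k * d + d) mod N = Suc k * d" using Suc.prems by (simp add: add.commute)
    ultimately show ?case by simp
  qed
  have dvd: "d dvd x" if x: "x \<in> insert N B" for x
  proof (rule ccontr)
    assume "\<not> d dvd x"
    define q r where "q = x div d" and "r = x mod d"
    have x_eq: "x = q * d + r" and r: "0 < r" "r < d"
      using \<open>\<not> d dvd x\<close> d(2) unfolding q_def r_def by (auto simp: dvd_eq_mod_eq_0)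
    have "x \<le> N" using x sub by auto
    then have "q * d \<in> B" using multiple x_eq r by simp
    moreover have "(q * d + r) mod N \<in> B" using x sub zero x_eq by auto
    ultimately obtain r' where r': "r' \<in> B" "(r' + q * d) mod N = (r + q * d) mod N"
      using closed by (metis (no_types, lifting) add.commute imageE)
    have "r < N" using r d sub by auto
    moreover have "r' < N" using r'(1) sub by auto
    ultimately have "r' = r"
      using r'(2) cong_add_rcancel_nat[of r' "q * d" r N] unfolding cong_def by simp
    then show False using r' r d_min by fastforce
  qed
  have "B = {z. z < N \<and> d dvd z}"
  proof
    show "B \<subseteq> {z. z < N \<and> d dvd z}" using sub dvd by auto
    show "{z. z < N \<and> d dvd z} \<subseteq> B" using multiple by (auto elim!: dvdE simp: mult.commute)
  qed
  with dvd show ?thesis by blast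
qed

lemma translation_invariant_partition:
  fixes N :: nat
  assumes part: "is_partition {..<N} P"
    and inv: "\<And>k B. k < N \<Longrightarrow> B \<in> P \<Longrightarrow> (\<lambda>x. (x + k) mod N) ` B \<in> P"
  shows "\<exists>d. d dvd N \<and> P = mod_class N d ` {..<N}"
proof (cases "N = 0")
  case True
  then have "P = {}" using part unfolding is_partition_def by auto
  then show ?thesis using True by simp
next
  case False
  let ?t = "\<lambda>k x. (x + k) mod N"
  have same_block: "B = C" if "B \<in> P" "C \<in> P" "x \<in> B" "x \<in> C" for B C x
    using part that unfolding is_partition_def by blast
  have "0 \<in> \<Union>P" using part False unfolding is_partition_def by auto
  then obtain B0 where B0: "B0 \<in> P" "0 \<in> B0" by blast
  have B0_sub: "B0 \<subseteq> {..<N}" using part B0 unfolding is_partition_def by auto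
  have block: "?t x ` B0 \<in> P" "x \<in> ?t x ` B0" if "x < N" for x
    using inv[OF that B0(1)] B0(2) that by (auto intro!: image_eqI[of _ _ 0])
  have "?t h ` B0 = B0" if "h \<in> B0" for h
    using same_block[OF block(1) B0(1) block(2) that] that B0_sub by auto
  then obtain d where d: "d dvd N" "B0 = {z. z < N \<and> d dvd z}"
    using translation_closed_eq_multiples[OF B0(2) B0_sub] by blast
  then have "B0 = mod_class N d 0" unfolding mod_class_def by (auto simp: dvd_eq_mod_eq_0)
  then have translate_B0: "?t x ` B0 = mod_class N d x" for x
    using add_mod_image_mod_class[OF d(1)] by simp
  have "P = mod_class N d ` {..<N}"
  proof
    show "P \<subseteq> mod_class N d ` {..<N}"
    proof
      fix B assume B: "B \<in> P"
      then have "B \<noteq> {}" using part unfolding is_partition_def by auto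
      then obtain x where x: "x \<in> B" by blast
      then have "x < N" using part B unfolding is_partition_def by auto
      then have "B = mod_class N d x" using same_block[OF B block(1) x block(2)] translate_B0 by simp
      then show "B \<in> mod_class N d ` {..<N}" using \<open>x < N\<close> by simp
    qed
    show "mod_class N d ` {..<N} \<subseteq> P" using block(1) translate_B0 by auto
  qed
  with d(1) show ?thesis by blast
qed

lemma translation_invariant_partition_pow2:
  assumes "is_partition {..<(2::nat)^n} P"
    and "\<And>k B. k < 2^n \<Longrightarrow> B \<in> P \<Longrightarrow> (\<lambda>x. (x + k) mod 2^n) ` B \<in> P"
  shows "P = {{..<2^n}} \<or> P = (\<lambda>x. {x}) ` {..<2^n} \<or>
    (\<exists>i. 0 < i \<and> i < n \<and> P = mod_class (2^n) (2^i) ` {..<2^n})"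
proof -
  obtain d where "d dvd 2^n" and P: "P = mod_class (2^n) d ` {..<2^n}"
    using translation_invariant_partition[OF assms] by blast
  then obtain i where "i \<le> n" and "d = 2^i"
    using divides_primepow_nat[OF two_is_prime_nat] by blast
  then consider "i = 0" | "i = n" | "0 < i \<and> i < n" by linarith
  then show ?thesis
  proof cases
    case 1
    then have "P = (\<lambda>_. {..<2^n}) ` {..<(2::nat)^n}"
      unfolding P \<open>d = 2^i\<close> mod_class_def by auto
    then show ?thesis by auto
  next
    case 2
    then have "P = (\<lambda>x. {x}) ` {..<(2::nat)^n}"
      unfolding P \<open>d = 2^i\<close> mod_class_def by (auto intro!: image_cong)
    then show ?thesis by simp
  qed (use P \<open>d = 2^i\<close> in blast)
qed

section \<open>Types of the cosets of the subgroups of the integers modulo 2^n\<close>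

lemma mod_class_pow2_mem:
  assumes "i \<le> n"
  shows "c mod 2^i \<in> mod_class (2^n) (2^i) c"
proof -
  have "c mod 2^i < (2::nat)^i" by simp
  also have "\<dots> \<le> 2^n" using assms by simp
  finally show ?thesis unfolding mod_class_def by simp
qed

lemma brick_symb_mod_class_White:
  assumes "Suc j * m \<le> i" and "i \<le> n"
  shows "brick_symb m (mod_class (2^n) (2^i) c) j = White"
proof -
  have "brick_proj m j z = brick_proj m j c" if "z \<in> mod_class (2^n) (2^i) c" for z
    using that brick_proj_mod_pow_eq[of z i c j m m] assms(1) brick_proj_less
    unfolding mod_class_def by simp
  moreover have "mod_class (2^n) (2^i) c \<noteq> {}" using mod_class_pow2_mem[OF assms(2)] by auto
  ultimately have "brick_proj m j ` mod_class (2^n) (2^i) c = {brick_proj m j c}" by auto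
  then show ?thesis unfolding brick_symb_def by simp
qed

lemma brick_symb_mod_class_Black:
  assumes "i \<le> j*m" and "Suc j * m \<le> n" and "0 < m"
  shows "brick_symb m (mod_class (2^n) (2^i) c) j = Black"
proof -
  let ?a = "c mod 2^i"
  have "?a < (2::nat)^i" by simp
  also have "\<dots> \<le> 2^(j*m)" using assms(1) by simp
  finally have a: "?a < 2^(j*m)" .
  have dvd: "(2::nat)^i dvd 2^(j*m)" using assms(1) by (rule le_imp_power_dvd)
  have "t \<in> brick_proj m j ` mod_class (2^n) (2^i) c" if t: "t < 2^m" for t
  proof -
    let ?z = "?a + t * 2^(j*m)"
    have "?z < (t + 1) * 2^(j*m)" using a by simp
    also have "\<dots> \<le> 2^m * 2^(j*m)" using t by (intro mult_right_mono) auto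
    also have "\<dots> = 2^(Suc j * m)" by (simp add: power_add[symmetric] algebra_simps)
    also have "\<dots> \<le> 2^n" using assms(2) by simp
    finally have "?z < 2^n" .
    moreover have "t * 2^(j*m) mod 2^i = 0" using dvd by simp
    then have "?z mod 2^i = c mod 2^i" by (metis mod_add_right_eq add_0_right mod_mod_trivial)
    moreover have "brick_proj m j ?z = t" unfolding brick_proj_def using a t by simp
    ultimately show ?thesis unfolding mod_class_def by force
  qed
  then have "brick_proj m j ` mod_class (2^n) (2^i) c = {..<2^m}" using brick_proj_less by auto
  moreover have "(2::nat)^m \<noteq> 1" using assms(3) by simp
  ultimately show ?thesis unfolding brick_symb_def by simp
qed

lemma card_brick_proj_mod_class_less:
  assumes "0 < r" and "r < m"
  shows "card (brick_proj m j ` mod_class (2^n) (2^(j*m + r)) c) < 2^m"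
proof -
  let ?C = "mod_class (2^n) (2^(j*m + r)) c"
  let ?e = "brick_proj m j c mod 2^r"
  have proj_mod: "brick_proj m j z mod 2^r = ?e" if "z \<in> ?C" for z
    using that brick_proj_mod_pow_eq[of z "j*m + r" c j m r] assms(2)
    unfolding mod_class_def by simp
  have "(?e + 1) mod 2^r \<notin> brick_proj m j ` ?C"
  proof
    assume "(?e + 1) mod 2^r \<in> brick_proj m j ` ?C"
    then obtain z where "z \<in> ?C" and "brick_proj m j z = (?e + 1) mod 2^r" by auto
    then have "(?e + 1) mod 2^r = ?e mod 2^r" using proj_mod by (metis mod_mod_trivial)
    moreover have "(1::nat) < 2^r" using assms(1) one_less_power[of "2::nat" r] by simp
    ultimately show False using add_one_mod_neq by blast
  qed
  moreover have "(?e + 1) mod 2^r < (2::nat)^m"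
    by (rule less_trans[OF mod_less_divisor]) (simp_all add: assms(2))
  ultimately have "brick_proj m j ` ?C \<subset> {..<2^m}" using brick_proj_less by auto
  then have "card (brick_proj m j ` ?C) < card {..<(2::nat)^m}"
    by (rule psubset_card_mono[OF finite_lessThan])
  then show ?thesis by simp
qed

lemma card_brick_proj_mod_class_neq_1:
  assumes "r < m" and "j*m + r < n"
  shows "card (brick_proj m j ` mod_class (2^n) (2^(j*m + r)) c) \<noteq> 1"
proof
  let ?C = "mod_class (2^n) (2^(j*m + r)) c" and ?a = "c mod 2^(j*m + r)"
  assume "card (brick_proj m j ` ?C) = 1"
  then obtain x where x: "brick_proj m j ` ?C = {x}" by (rule card_1_singletonE)
  have a: "?a \<in> ?C" using assms(2) by (intro mod_class_pow2_mem) simp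
  have "?a + 2^(j*m + r) < 2 * 2^(j*m + r)" by simp
  also have "\<dots> \<le> 2^n" using assms(2) by (simp flip: power_Suc)
  finally have a': "?a + 2^(j*m + r) \<in> ?C" unfolding mod_class_def by simp
  let ?q = "?a div 2^(j*m)"
  have "?a < 2^r * 2^(j*m)" by (simp flip: power_add add.commute)
  then have q: "?q < 2^r" by (rule less_mult_imp_div_less)
  have "?q + 2^r < 2^Suc r" using q by simp
  also have "\<dots> \<le> 2^m" using assms(1) by (intro power_increasing) simp_all
  finally have "?q + 2^r < 2^m" .
  moreover have "(?a + 2^(j*m + r)) div 2^(j*m) = ?q + 2^r" by (simp add: power_add)
  ultimately have "brick_proj m j (?a + 2^(j*m + r)) = ?q + 2^r"
    unfolding brick_proj_def by simp
  moreover have "brick_proj m j ?a = ?q"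
    unfolding brick_proj_def using q \<open>?q + 2^r < 2^m\<close> by simp
  moreover have "brick_proj m j ?a \<in> {x}" "brick_proj m j (?a + 2^(j*m + r)) \<in> {x}"
    unfolding x[symmetric] by (rule imageI[OF a], rule imageI[OF a'])
  ultimately show False by simp
qed

lemma brick_symb_mod_class_Ruled:
  assumes "0 < r" and "r < m" and "j*m + r < n"
  shows "brick_symb m (mod_class (2^n) (2^(j*m + r)) c) j = Ruled"
proof -
  let ?P = "brick_proj m j ` mod_class (2^n) (2^(j*m + r)) c"
  have "card ?P < 2^m" by (rule card_brick_proj_mod_class_less[OF assms(1,2)])
  moreover have "card ?P \<noteq> 1" by (rule card_brick_proj_mod_class_neq_1[OF assms(2,3)])
  ultimately show ?thesis unfolding brick_symb_def by simp
qed

lemma set_type_mod_class: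
  assumes "0 < m" and "n = m * \<delta>" and "i < n"
  defines "b \<equiv> of_bool (\<not> m dvd i)"
  shows "set_type m \<delta> (mod_class (2^n) (2^i) c) =
    replicate (i div m) White @ replicate b Ruled @ replicate (\<delta> - i div m - b) Black"
proof -
  let ?C = "mod_class (2^n) (2^i) c" and ?a = "i div m"
  have "?a < \<delta>" using assms by (simp add: less_mult_imp_div_less mult.commute)
  then have ab: "?a + b \<le> \<delta>" unfolding b_def by simp
  have split: "[0..<\<delta>] = [0..<?a] @ [?a..<?a + b] @ [?a + b..<\<delta>]"
    using ab upt_add_eq_append[of 0 ?a "\<delta> - ?a"] upt_add_eq_append[of ?a "?a + b" "\<delta> - ?a - b"]
    by simp
  have "map (brick_symb m ?C) [0..<?a] = map (\<lambda>_. White) [0..<?a]"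
  proof (rule map_cong)
    fix k assume "k \<in> set [0..<?a]"
    then have "Suc k * m \<le> ?a * m" by (intro mult_le_mono1) simp
    also have "\<dots> \<le> i" by simp
    finally show "brick_symb m ?C k = White"
      using assms(3) by (intro brick_symb_mod_class_White) simp_all
  qed simp
  moreover have "map (brick_symb m ?C) [?a..<?a + b] = map (\<lambda>_. Ruled) [?a..<?a + b]"
  proof (cases "m dvd i")
    case False
    then have "brick_symb m (mod_class (2^n) (2^(?a*m + i mod m)) c) ?a = Ruled"
      using assms(1,3) by (intro brick_symb_mod_class_Ruled) (simp_all add: dvd_eq_mod_eq_0)
    then show ?thesis using False unfolding b_def by simp
  qed (simp add: b_def)
  moreover have "map (brick_symb m ?C) [?a + b..<\<delta>] = map (\<lambda>_. Black) [?a + b..<\<delta>]"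
  proof (rule map_cong)
    fix k assume k: "k \<in> set [?a + b..<\<delta>]"
    have "i \<le> k*m"
    proof (cases "m dvd i")
      case True
      then have "i = ?a * m" by simp
      also have "\<dots> \<le> k * m" using k by simp
      finally show ?thesis .
    next
      case False
      have "i < Suc ?a * m" using assms(1) by (simp add: dividend_less_div_times)
      also have "\<dots> \<le> k * m" using k False unfolding b_def by (intro mult_le_mono1) simp
      finally show ?thesis by simp
    qed
    moreover have "Suc k * m \<le> \<delta> * m" using k by (intro mult_le_mono1) simp
    then have "Suc k * m \<le> n" using assms(2) by (simp add: mult.commute)
    ultimately show "brick_symb m ?C k = Black"
      using assms(1) by (intro brick_symb_mod_class_Black)
  qed simp
  ultimately show ?thesis
    unfolding set_type_def split map_append by (simp add: map_replicate_const)
qed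

lemma non_type_preserving_image_not_mod_class:
  assumes "0 < m" and n: "n = m * \<delta>" and sbox: "parallel_sbox m \<delta> gs g"
    and ntp: "non_type_preserving m \<delta> l" and "0 < i" and "i < n"
  shows "l ` g ` mod_class (2^n) (2^i) 0 \<noteq> mod_class (2^n) (2^i) c"
proof
  assume image_eq: "l ` g ` mod_class (2^n) (2^i) 0 = mod_class (2^n) (2^i) c"
  let ?C = "mod_class (2^n) (2^i)" and ?D = "g ` mod_class (2^n) (2^i) 0"
  define a b where "a = i div m" and "b = (of_bool (\<not> m dvd i) :: nat)"
  have type: "set_type m \<delta> (?C x) =
      replicate a White @ replicate b Ruled @ replicate (\<delta> - a - b) Black" for x
    unfolding a_def b_def using set_type_mod_class assms(1,6) n by blast
  have "?C 0 \<subseteq> vspace (m*\<delta>)" unfolding mod_class_def vspace_def n by auto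
  then have D_sub: "?D \<subseteq> vspace (m*\<delta>)" and type_D: "set_type m \<delta> ?D = set_type m \<delta> (?C 0)"
    using parallel_sbox_brick_proj(1)[OF sbox] set_type_parallel_sbox_image[OF sbox] by auto
  have "?D \<noteq> {}" using mod_class_pow2_mem[of i n 0] assms(6) by auto
  moreover have "a < \<delta>" unfolding a_def using assms(1,6) n
    by (simp add: less_mult_imp_div_less mult.commute)
  moreover have "0 < a \<or> b = 1" unfolding a_def b_def using assms(5) by auto
  ultimately have "set_type m \<delta> (l ` ?D) \<noteq> set_type m \<delta> ?D"
    using D_sub type_D type[of 0] unfolding b_def
    by (intro ntp[unfolded non_type_preserving_def, rule_format, where D = ?D and a = a and b = b and c = "\<delta> - a - b"])
      (auto simp: b_def)
  then show False using image_eq type_D type by simp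
qed

section \<open>The group generated by the round functions\<close>

lemma transl_bij: "bij_betw (transl n k) (vspace n) (vspace n)"
  using bij_betw_add_mod[of k "2^n"] unfolding vspace_def transl_def[abs_def] .

lemma round_fun_Bij:
  assumes "bij_betw g (vspace n) (vspace n)" and "bij_betw l (vspace n) (vspace n)"
  shows "round_fun n g l k \<in> Bij (vspace n)"
proof -
  have "bij_betw (transl n k \<circ> l \<circ> g) (vspace n) (vspace n)"
    using assms transl_bij by (blast intro: bij_betw_trans)
  then show ?thesis unfolding round_fun_def Bij_def by (simp add: bij_betw_restrict_eq o_def)
qed

lemma transl_in_round_group:
  assumes g: "bij_betw g (vspace n) (vspace n)" and l: "bij_betw l (vspace n) (vspace n)"
    and k: "k \<in> vspace n"
  shows "restrict (transl n k) (vspace n) \<in>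
    generate (BijGroup (vspace n)) {round_fun n g l k | k. k \<in> vspace n}"
proof -
  let ?S = "vspace n" and ?\<sigma> = "restrict (transl n k) (vspace n)" and ?\<epsilon> = "round_fun n g l"
  let ?BG = "BijGroup ?S"
  have \<sigma>: "?\<sigma> \<in> carrier ?BG"
    using transl_bij by (simp add: BijGroup_def Bij_def bij_betw_restrict_eq)
  have \<epsilon>: "?\<epsilon> k' \<in> carrier ?BG" for k'
    using round_fun_Bij[OF g l] by (simp add: BijGroup_def)
  have "l (g x) \<in> ?S" if "x \<in> ?S" for x using g l that by (meson bij_betw_apply)
  \<comment> \<open>\<open>\<otimes>\<close> in \<open>BijGroup\<close> is composition \<open>f \<circ> g\<close>, so this is \<open>\<epsilon>\<^sub>k = \<epsilon>\<^sub>0 \<sigma>\<^sub>k\<close> in right-action notation\<close>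
  then have "compose ?S ?\<sigma> (?\<epsilon> 0) = ?\<epsilon> k"
    by (auto simp: compose_def round_fun_def transl_def vspace_def)
  moreover have "?\<sigma> \<otimes>\<^bsub>?BG\<^esub> ?\<epsilon> 0 = compose ?S ?\<sigma> (?\<epsilon> 0)"
    using \<sigma> \<epsilon> by (simp add: BijGroup_def)
  ultimately have "?\<epsilon> k = ?\<sigma> \<otimes>\<^bsub>?BG\<^esub> ?\<epsilon> 0" by simp
  then have "?\<sigma> = ?\<epsilon> k \<otimes>\<^bsub>?BG\<^esub> inv\<^bsub>?BG\<^esub> ?\<epsilon> 0"
    using group.inv_solve_right[OF group_BijGroup \<sigma> \<epsilon>[of k] \<epsilon>[of 0]] by blast
  moreover have "?\<epsilon> k \<in> generate ?BG {?\<epsilon> k | k. k \<in> ?S}"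
    using k by (intro generate.incl) blast
  moreover have "inv\<^bsub>?BG\<^esub> ?\<epsilon> 0 \<in> generate ?BG {?\<epsilon> k | k. k \<in> ?S}"
    by (intro generate.inv) (auto simp: vspace_def)
  ultimately show ?thesis by (simp add: generate.eng)
qed

lemma round_fun_0_image:
  assumes g: "bij_betw g (vspace n) (vspace n)" and l: "bij_betw l (vspace n) (vspace n)"
    and D: "D \<subseteq> vspace n"
  shows "round_fun n g l 0 ` D = l ` g ` D"
proof -
  have "round_fun n g l 0 x = l (g x)" if "x \<in> D" for x
    using that D bij_betw_apply[OF l bij_betw_apply[OF g]]
    by (auto simp: round_fun_def transl_def vspace_def)
  then show ?thesis by (simp add: image_image)
qed

lemma round_group_transitive:
  assumes "bij_betw g (vspace n) (vspace n)" and "bij_betw l (vspace n) (vspace n)"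
    and "x \<in> vspace n" and "y \<in> vspace n"
  shows "\<exists>h \<in> generate (BijGroup (vspace n)) {round_fun n g l k | k. k \<in> vspace n}. h x = y"
proof -
  let ?k = "(y + (2^n - x)) mod 2^n"
  have "restrict (transl n ?k) (vspace n) x = y"
    using assms(3,4) by (simp add: transl_def vspace_def mod_add_right_eq)
  moreover have "?k \<in> vspace n" by (simp add: vspace_def)
  ultimately show ?thesis using transl_in_round_group[OF assms(1,2)] by blast
qed

lemma round_group_invariant_partition:
  assumes "bij_betw g (vspace n) (vspace n)" and "bij_betw l (vspace n) (vspace n)"
    and part: "is_partition (vspace n) P"
    and inv: "\<And>h B. h \<in> generate (BijGroup (vspace n)) {round_fun n g l k | k. k \<in> vspace n}
      \<Longrightarrow> B \<in> P \<Longrightarrow> h ` B \<in> P"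
  shows "P = {vspace n} \<or> P = (\<lambda>x. {x}) ` vspace n \<or>
    (\<exists>i. 0 < i \<and> i < n \<and> P = mod_class (2^n) (2^i) ` vspace n)"
proof -
  have "(\<lambda>x. (x + k) mod 2^n) ` B \<in> P" if "k < 2^n" and "B \<in> P" for k B
  proof -
    have "B \<subseteq> vspace n" using part that(2) unfolding is_partition_def by auto
    then have "restrict (transl n k) (vspace n) ` B = (\<lambda>x. (x + k) mod 2^n) ` B"
      by (auto simp: transl_def)
    moreover have "k \<in> vspace n" using that(1) by (simp add: vspace_def)
    ultimately show ?thesis using inv[OF transl_in_round_group[OF assms(1,2)] that(2)] by metis
  qed
  moreover have "is_partition {..<2^n} P" using part by (simp add: vspace_def)
  ultimately show ?thesis
    unfolding vspace_def by (intro translation_invariant_partition_pow2)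
qed

theorem mainTheorem2:
  fixes m \<delta> n :: nat and gs :: "nat \<Rightarrow> nat \<Rightarrow> nat" and g l :: "nat \<Rightarrow> nat"
  assumes "m \<ge> 1" and "\<delta> \<ge> 1" and "n = m * \<delta>"
    and "parallel_sbox m \<delta> gs g"
    and "bij_betw l (vspace n) (vspace n)" and "f2_linear n l"
    and "non_type_preserving m \<delta> l"
  shows "primitive_on
           (generate (BijGroup (vspace n)) {round_fun n g l k | k. k \<in> vspace n})
           (vspace n)"
proof -
  let ?S = "vspace n" and ?G = "generate (BijGroup (vspace n)) {round_fun n g l k | k. k \<in> vspace n}"
  have g: "bij_betw g ?S ?S" using parallel_sbox_bij assms(3,4) by blast
  show ?thesis unfolding primitive_on_def
  proof (intro conjI ballI allI impI)
    fix x y assume "x \<in> ?S" and "y \<in> ?S"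
    then show "\<exists>h\<in>?G. h x = y" by (rule round_group_transitive[OF g assms(5)])
  next
    fix P assume "is_partition ?S P \<and> (\<forall>h\<in>?G. \<forall>B\<in>P. h ` B \<in> P)"
    then have part: "is_partition ?S P" and inv: "\<And>h B. h \<in> ?G \<Longrightarrow> B \<in> P \<Longrightarrow> h ` B \<in> P"
      by auto
    from round_group_invariant_partition[OF g assms(5) part inv]
    consider "P = {?S} \<or> P = (\<lambda>x. {x}) ` ?S"
      | i where "0 < i" "i < n" "P = mod_class (2^n) (2^i) ` ?S"
      by blast
    then show "P = {?S} \<or> P = (\<lambda>x. {x}) ` ?S"
    proof cases
      case (2 i)
      let ?C = "mod_class (2^n) (2^i) 0"
      have C: "?C \<subseteq> ?S" by (auto simp: mod_class_def vspace_def)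
      have "?C \<in> mod_class (2^n) (2^i) ` ?S" by (rule imageI) (simp add: vspace_def)
      then have "?C \<in> P" using 2(3) by simp
      moreover have "round_fun n g l 0 \<in> ?G" by (intro generate.incl) (auto simp: vspace_def)
      ultimately have "round_fun n g l 0 ` ?C \<in> P" using inv by blast
      then have "l ` g ` ?C \<in> P" unfolding round_fun_0_image[OF g assms(5) C] .
      then obtain c where "l ` g ` ?C = mod_class (2^n) (2^i) c" using 2 by auto
      moreover have "0 < m" using assms(1) by simp
      ultimately show ?thesis
        using non_type_preserving_image_not_mod_class[OF _ assms(3,4,7) 2(1,2)] by blast
    qed
  qed
qed

end
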